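(* Let $G$ be a locally finite graph and $F$ a subgraph of $G$. If $F$ is faithful to $G$, then the line graph $L(F)$ is faithful to the line graph $L(G)$.
   Context: $L(H)$ is the line graph of $H$ (vertices are edges of $H$, adjacent when sharing an endpoint); $L(F)$ is naturally a subgraph of $L(G)$. A ray is a one-way infinite path; two rays of a graph $H$ are equivalent in $H$ if for every finite $S\subseteq V(H)$ some component of $H-S$ contains tails of both; the classes are the ends of $H$. A subgraph $A$ of $B$ is faithful to $B$ if (i) every end of $B$ contains a ray of $A$, and (ii) any two rays of $A$ are equivalent in $A$ if and only if they are equivalent in $B$. *)

theory Defs
  imports Main
begin

type_synonym 'a graph = "'a set \<times> 'a set set"

definition verts :: "'a graph \<Rightarrow> 'a set" where "verts H = fst H"
definition edges :: "'a graph \<Rightarrow> 'a set set" where "edges H = snd H"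

definition is_graph :: "'a graph \<Rightarrow> bool" where
  "is_graph H \<longleftrightarrow> (\<forall>e\<in>edges H. \<exists>u v. u \<noteq> v \<and> e = {u, v} \<and> u \<in> verts H \<and> v \<in> verts H)"

definition locally_finite :: "'a graph \<Rightarrow> bool" where
  "locally_finite H \<longleftrightarrow> (\<forall>v\<in>verts H. finite {e\<in>edges H. v \<in> e})"

definition subgraph :: "'a graph \<Rightarrow> 'a graph \<Rightarrow> bool" where
  "subgraph A B \<longleftrightarrow> is_graph A \<and> is_graph B \<and> verts A \<subseteq> verts B \<and> edges A \<subseteq> edges B"

definition line_graph :: "'a graph \<Rightarrow> 'a set graph" where
  "line_graph H = (edges H, {{e, f} | e f. e \<in> edges H \<and> f \<in> edges H \<and> e \<noteq> f \<and> e \<inter> f \<noteq> {}})"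

definition del_verts :: "'a graph \<Rightarrow> 'a set \<Rightarrow> 'a graph" where
  "del_verts H S = (verts H - S, {e \<in> edges H. e \<inter> S = {}})"

definition adj :: "'a graph \<Rightarrow> 'a \<Rightarrow> 'a \<Rightarrow> bool" where
  "adj H x y \<longleftrightarrow> {x, y} \<in> edges H"

definition components :: "'a graph \<Rightarrow> 'a set set" where
  "components H = {{y. (adj H)\<^sup>*\<^sup>* x y} | x. x \<in> verts H}"

definition ray :: "'a graph \<Rightarrow> (nat \<Rightarrow> 'a) \<Rightarrow> bool" where
  "ray H r \<longleftrightarrow> inj r \<and> (\<forall>i. r i \<in> verts H) \<and> (\<forall>i. {r i, r (Suc i)} \<in> edges H)"

definition has_tail_in :: "(nat \<Rightarrow> 'a) \<Rightarrow> 'a set \<Rightarrow> bool" where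
  "has_tail_in r C \<longleftrightarrow> (\<exists>k. \<forall>j\<ge>k. r j \<in> C)"

definition ray_equiv :: "'a graph \<Rightarrow> (nat \<Rightarrow> 'a) \<Rightarrow> (nat \<Rightarrow> 'a) \<Rightarrow> bool" where
  "ray_equiv H r s \<longleftrightarrow>
     (\<forall>S. finite S \<and> S \<subseteq> verts H \<longrightarrow>
        (\<exists>C\<in>components (del_verts H S). has_tail_in r C \<and> has_tail_in s C))"

definition ends :: "'a graph \<Rightarrow> (nat \<Rightarrow> 'a) set set" where
  "ends H = {{s. ray H s \<and> ray_equiv H r s} | r. ray H r}"

definition faithful :: "'a graph \<Rightarrow> 'a graph \<Rightarrow> bool" where
  "faithful A B \<longleftrightarrow>
     (\<forall>\<omega>\<in>ends B. \<exists>r\<in>\<omega>. ray A r) \<and>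
     (\<forall>r s. ray A r \<and> ray A s \<longrightarrow> (ray_equiv A r s \<longleftrightarrow> ray_equiv B r s))"

end

theory Submission
  imports Defs
begin

text \<open>A ray R of the line graph L(H) determines the sequence of its junctions, chosen common endpoints
of R i and R (i+1). A finite edge set S' separates R from Q in L(H) whenever the endpoints of S'
separate their junction sequences in H, and a finite vertex set S of H is matched by the set of edges
at S, which is finite because H is locally finite. Hence R and Q are equivalent in L(H) iff their
junction sequences are equivalent in H (equivalence of tails makes sense for arbitrary sequences).
Local finiteness also means that a junction sequence visits each vertex only finitely often, so
erasing its loops gives a ray of H equivalent to it, the vertex ray of R, which does not depend on H.
Thus rays of L(F) are equivalent in L(F), resp. L(G), iff their vertex rays are equivalent in F,
resp. G, and the end of L(G) containing R contains the edge sequence of every F-ray in the end of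
the vertex ray of R.\<close>

subsection \<open>Components and equivalence of rays\<close>

lemma verts_del_verts [simp]: "verts (del_verts H S) = verts H - S"
  by (simp add: verts_def del_verts_def)

lemma edges_del_verts [simp]: "edges (del_verts H S) = {e \<in> edges H. e \<inter> S = {}}"
  by (simp add: edges_def del_verts_def)

lemma verts_line_graph [simp]: "verts (line_graph H) = edges H"
  by (simp add: verts_def line_graph_def)

lemma edges_line_graph:
  "edges (line_graph H) = {{e, f} | e f. e \<in> edges H \<and> f \<in> edges H \<and> e \<noteq> f \<and> e \<inter> f \<noteq> {}}"
  by (simp add: edges_def line_graph_def)

lemma rtranclp_adj_sym: "(adj H)\<^sup>*\<^sup>* x y \<Longrightarrow> (adj H)\<^sup>*\<^sup>* y x"
  by (metis adj_def insert_commute symp_def symp_rtranclp sympD)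

lemma rtranclp_adj_del_verts_notin: "(adj (del_verts H S))\<^sup>*\<^sup>* x y \<Longrightarrow> x \<notin> S \<Longrightarrow> y \<notin> S"
  by (induction rule: rtranclp_induct) (auto simp: adj_def)

lemma mem_components_iff: "C \<in> components H \<longleftrightarrow> (\<exists>x\<in>verts H. C = {y. (adj H)\<^sup>*\<^sup>* x y})"
  by (auto simp: components_def)

lemma components_eq_if_common:
  assumes "C \<in> components H" "D \<in> components H" "w \<in> C" "w \<in> D"
  shows "C = D"
proof -
  obtain x where x: "C = {y. (adj H)\<^sup>*\<^sup>* x y}" using assms(1) by (auto simp: mem_components_iff)
  obtain z where z: "D = {y. (adj H)\<^sup>*\<^sup>* z y}" using assms(2) by (auto simp: mem_components_iff)
  have "(adj H)\<^sup>*\<^sup>* x w" "(adj H)\<^sup>*\<^sup>* z w" using assms x z by auto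
  then have "(adj H)\<^sup>*\<^sup>* x z" "(adj H)\<^sup>*\<^sup>* z x" by (metis rtranclp_adj_sym rtranclp_trans)+
  then show ?thesis unfolding x z by (auto intro: rtranclp_trans)
qed

lemma ray_equiv_sym: "ray_equiv H p q \<Longrightarrow> ray_equiv H q p"
  unfolding ray_equiv_def by blast

lemma ray_equiv_trans:
  assumes "ray_equiv H p q" "ray_equiv H q s"
  shows "ray_equiv H p s"
  unfolding ray_equiv_def
proof (intro allI impI)
  fix S assume S: "finite S \<and> S \<subseteq> verts H"
  obtain C where C: "C \<in> components (del_verts H S)" "has_tail_in p C" "has_tail_in q C"
    using assms(1) S unfolding ray_equiv_def by blast
  obtain D where D: "D \<in> components (del_verts H S)" "has_tail_in q D" "has_tail_in s D"
    using assms(2) S unfolding ray_equiv_def by blast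
  obtain k l where "\<forall>j\<ge>k. q j \<in> C" "\<forall>j\<ge>l. q j \<in> D"
    using C(3) D(2) unfolding has_tail_in_def by blast
  then have "C = D" using components_eq_if_common[OF C(1) D(1)] by (meson max.cobounded1 max.cobounded2)
  then show "\<exists>C\<in>components (del_verts H S). has_tail_in p C \<and> has_tail_in s C" using C D by blast
qed

lemma ray_equiv_cong:
  assumes "ray_equiv H p p'" "ray_equiv H q q'"
  shows "ray_equiv H p q \<longleftrightarrow> ray_equiv H p' q'"
  by (meson assms ray_equiv_sym ray_equiv_trans)

lemma ray_equiv_reindex:
  assumes "ray_equiv H p q" "\<And>j. j \<le> idx j"
  shows "ray_equiv H p (q \<circ> idx)"
  unfolding ray_equiv_def
proof (intro allI impI)
  fix S assume "finite S \<and> S \<subseteq> verts H"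
  then obtain C where C: "C \<in> components (del_verts H S)" "has_tail_in p C" "has_tail_in q C"
    using assms(1) unfolding ray_equiv_def by blast
  have "has_tail_in (q \<circ> idx) C"
    using C(3) assms(2) unfolding has_tail_in_def comp_def by (meson le_trans)
  then show "\<exists>C\<in>components (del_verts H S). has_tail_in p C \<and> has_tail_in (q \<circ> idx) C"
    using C by blast
qed

lemma ray_equiv_refl:
  assumes "ray H r"
  shows "ray_equiv H r r"
  unfolding ray_equiv_def
proof (intro allI impI)
  fix S assume S: "finite S \<and> S \<subseteq> verts H"
  have "finite (r -` S)" using S assms by (simp add: finite_vimageI ray_def)
  then obtain k where "\<forall>j\<in>r -` S. j < k" using finite_nat_set_iff_bounded by blast
  then have outside: "r j \<notin> S" if "k \<le> j" for j using that by (meson leD vimageI2)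
  have "(adj (del_verts H S))\<^sup>*\<^sup>* (r k) (r j)" if "k \<le> j" for j
    using that
  proof (induction j rule: dec_induct)
    case (step n)
    have "adj (del_verts H S) (r n) (r (Suc n))"
      using assms outside[of n] outside[of "Suc n"] step(1) by (auto simp: adj_def ray_def)
    then show ?case using step(3) by (simp add: rtranclp.rtrancl_into_rtrancl)
  qed simp
  moreover have "r k \<in> verts (del_verts H S)" using assms outside[of k] by (simp add: ray_def)
  ultimately have "{y. (adj (del_verts H S))\<^sup>*\<^sup>* (r k) y} \<in> components (del_verts H S)"
    "has_tail_in r {y. (adj (del_verts H S))\<^sup>*\<^sup>* (r k) y}"
    unfolding mem_components_iff has_tail_in_def by auto
  then show "\<exists>C\<in>components (del_verts H S). has_tail_in r C \<and> has_tail_in r C" by blast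
qed

subsection \<open>Rays of the line graph\<close>

lemma is_graph_edgeD:
  "is_graph H \<Longrightarrow> e \<in> edges H \<Longrightarrow> \<exists>u v. u \<noteq> v \<and> e = {u, v} \<and> u \<in> verts H \<and> v \<in> verts H"
  by (simp add: is_graph_def)

lemma is_graph_edge_subset_verts: "is_graph H \<Longrightarrow> e \<in> edges H \<Longrightarrow> e \<subseteq> verts H"
  using is_graph_edgeD by fastforce

lemma is_graph_finite_edge: "is_graph H \<Longrightarrow> e \<in> edges H \<Longrightarrow> finite e"
  using is_graph_edgeD by fastforce

lemma is_graph_edge_nonempty: "is_graph H \<Longrightarrow> e \<in> edges H \<Longrightarrow> e \<noteq> {}"
  using is_graph_edgeD by fastforce

lemma ray_line_graph_iff:
  "ray (line_graph H) R \<longleftrightarrow> inj R \<and> (\<forall>i. R i \<in> edges H) \<and> (\<forall>i. R i \<inter> R (Suc i) \<noteq> {})"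
proof -
  have "{R i, R (Suc i)} \<in> edges (line_graph H) \<longleftrightarrow>
      R i \<in> edges H \<and> R (Suc i) \<in> edges H \<and> R i \<noteq> R (Suc i) \<and> R i \<inter> R (Suc i) \<noteq> {}" for i
    unfolding edges_line_graph by (auto simp: doubleton_eq_iff)
  moreover have "inj R \<Longrightarrow> R i \<noteq> R (Suc i)" for i by (metis Suc_n_not_n injD)
  ultimately show ?thesis unfolding ray_def by auto
qed

definition junction :: "(nat \<Rightarrow> 'a set) \<Rightarrow> nat \<Rightarrow> 'a" where
  "junction R i = (SOME v. v \<in> R i \<inter> R (Suc i))"

lemma junction_mem:
  assumes "ray (line_graph H) R"
  shows "junction R i \<in> R i" "junction R i \<in> R (Suc i)"
proof -
  have "\<exists>v. v \<in> R i \<inter> R (Suc i)" using assms by (auto simp: ray_line_graph_iff)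
  then have "junction R i \<in> R i \<inter> R (Suc i)" unfolding junction_def by (rule someI_ex)
  then show "junction R i \<in> R i" "junction R i \<in> R (Suc i)" by auto
qed

lemma junction_walk:
  assumes "is_graph H" "ray (line_graph H) R" "junction R i \<noteq> junction R (Suc i)"
  shows "{junction R i, junction R (Suc i)} \<in> edges H"
proof -
  have edge: "R (Suc i) \<in> edges H" using assms(2) by (simp add: ray_line_graph_iff)
  then obtain u v where "u \<noteq> v" "R (Suc i) = {u, v}" using is_graph_edgeD[OF assms(1)] by blast
  then have "R (Suc i) = {junction R i, junction R (Suc i)}"
    using junction_mem(2)[OF assms(2), of i] junction_mem(1)[OF assms(2), of "Suc i"] assms(3)
    by auto
  then show ?thesis using edge by simp
qed

lemma junction_in_verts:
  assumes "is_graph H" "ray (line_graph H) R"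
  shows "junction R i \<in> verts H"
proof -
  have "R i \<in> edges H" using assms(2) by (simp add: ray_line_graph_iff)
  then show ?thesis using is_graph_edge_subset_verts[OF assms(1)] junction_mem(1)[OF assms(2)] by blast
qed

lemma finite_junction_fibre:
  assumes "is_graph H" "locally_finite H" "ray (line_graph H) R"
  shows "finite {j. junction R j = v}"
proof (cases "v \<in> verts H")
  case True
  have "{j. junction R j = v} \<subseteq> R -` {e \<in> edges H. v \<in> e}"
    using junction_mem(1)[OF assms(3)] assms(3) by (auto simp: ray_line_graph_iff)
  moreover have "finite (R -` {e \<in> edges H. v \<in> e})"
    using assms True by (intro finite_vimageI) (auto simp: locally_finite_def ray_line_graph_iff)
  ultimately show ?thesis by (rule finite_subset)
next
  case False
  then show ?thesis using junction_in_verts[OF assms(1,3)] by (metis (mono_tags) empty_Collect_eq finite.emptyI)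
qed

subsection \<open>Transferring connectivity between H - S and L(H) - S'\<close>

lemma rtranclp_adj_del_verts_edge:
  assumes "is_graph H" "e \<in> edges H" "e \<inter> S = {}" "x \<in> e" "y \<in> e"
  shows "(adj (del_verts H S))\<^sup>*\<^sup>* x y"
proof (cases "x = y")
  case False
  obtain u v where "u \<noteq> v" "e = {u, v}" using is_graph_edgeD[OF assms(1,2)] by blast
  then have "e = {x, y}" using assms(4,5) False by auto
  then have "adj (del_verts H S) x y" using assms by (simp add: adj_def)
  then show ?thesis by simp
qed simp

lemma rtranclp_adj_line_graph_meeting:
  assumes "e \<in> edges H" "f \<in> edges H" "e \<notin> S'" "f \<notin> S'" "e \<inter> f \<noteq> {}"
  shows "(adj (del_verts (line_graph H) S'))\<^sup>*\<^sup>* e f"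
proof (cases "e = f")
  case False
  then have "{e, f} \<in> edges (line_graph H)" unfolding edges_line_graph using assms by blast
  then have "adj (del_verts (line_graph H) S') e f" using assms by (auto simp: adj_def)
  then show ?thesis by simp
qed simp

lemma reach_line_graph_imp_reach:
  assumes "is_graph H"
    and "(adj (del_verts (line_graph H) {e \<in> edges H. e \<inter> S \<noteq> {}}))\<^sup>*\<^sup>* e f"
    and "e \<in> edges H" "e \<inter> S = {}" "x \<in> e"
  shows "\<And>y. y \<in> f \<Longrightarrow> (adj (del_verts H S))\<^sup>*\<^sup>* x y"
  using assms(2)
proof (induction rule: rtranclp_induct)
  case base
  then show ?case using rtranclp_adj_del_verts_edge[OF assms(1,3,4,5)] by simp
next
  case (step f g)
  have "{f, g} \<in> edges (line_graph H)" "f \<notin> {e \<in> edges H. e \<inter> S \<noteq> {}}"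
    "g \<notin> {e \<in> edges H. e \<inter> S \<noteq> {}}"
    using step(2) by (auto simp: adj_def)
  then have fg: "f \<in> edges H" "g \<in> edges H" "f \<inter> g \<noteq> {}" "g \<inter> S = {}"
    unfolding edges_line_graph by (auto simp: doubleton_eq_iff)
  then obtain z where "z \<in> f" "z \<in> g" by blast
  then show ?case
    using step(3) rtranclp_adj_del_verts_edge[OF assms(1) fg(2,4) _ step(4)] rtranclp_trans by metis
qed

lemma reach_imp_reach_line_graph:
  assumes "(adj (del_verts H (\<Union>S')))\<^sup>*\<^sup>* x y"
    and "e \<in> edges H" "e \<notin> S'" "x \<in> e"
  shows "\<And>f. f \<in> edges H \<Longrightarrow> f \<notin> S' \<Longrightarrow> y \<in> f \<Longrightarrow> (adj (del_verts (line_graph H) S'))\<^sup>*\<^sup>* e f"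
  using assms(1)
proof (induction rule: rtranclp_induct)
  case base
  then show ?case using rtranclp_adj_line_graph_meeting[of e H f S'] assms(2-4) by blast
next
  case (step y z f)
  have yz: "{y, z} \<in> edges H" "{y, z} \<notin> S'" using step(2) by (auto simp: adj_def)
  have "(adj (del_verts (line_graph H) S'))\<^sup>*\<^sup>* e {y, z}" using step(3)[OF yz] by simp
  moreover have "(adj (del_verts (line_graph H) S'))\<^sup>*\<^sup>* {y, z} f"
    using rtranclp_adj_line_graph_meeting[OF yz(1) step(4) yz(2) step(5)] step(6) by blast
  ultimately show ?case by (rule rtranclp_trans)
qed

lemma ray_equiv_junction_if_ray_equiv_line_graph:
  assumes "is_graph H" "locally_finite H"
    and R: "ray (line_graph H) R" and Q: "ray (line_graph H) Q"
    and "ray_equiv (line_graph H) R Q"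
  shows "ray_equiv H (junction R) (junction Q)"
  unfolding ray_equiv_def
proof (intro allI impI)
  fix S assume S: "finite S \<and> S \<subseteq> verts H"
  define S' where "S' = {e \<in> edges H. e \<inter> S \<noteq> {}}"
  have "S' = (\<Union>v\<in>S. {e \<in> edges H. v \<in> e})" unfolding S'_def by auto
  then have "finite S'" using S assms(2) unfolding locally_finite_def by auto
  moreover have "S' \<subseteq> verts (line_graph H)" unfolding S'_def by auto
  ultimately obtain C' where C': "C' \<in> components (del_verts (line_graph H) S')"
      "has_tail_in R C'" "has_tail_in Q C'"
    using assms(5) unfolding ray_equiv_def by blast
  obtain e where e: "e \<in> edges H" "e \<notin> S'"
    and C'_eq: "C' = {f. (adj (del_verts (line_graph H) S'))\<^sup>*\<^sup>* e f}"
    using C'(1) unfolding mem_components_iff by auto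
  have eS: "e \<inter> S = {}" using e unfolding S'_def by auto
  obtain z where z: "z \<in> e" using is_graph_edge_nonempty[OF assms(1) e(1)] by blast
  define C where "C = {y. (adj (del_verts H S))\<^sup>*\<^sup>* z y}"
  have "z \<in> verts (del_verts H S)" using is_graph_edge_subset_verts[OF assms(1) e(1)] z eS by auto
  then have "C \<in> components (del_verts H S)" unfolding C_def mem_components_iff by blast
  moreover have "has_tail_in (junction X) C"
    if X: "ray (line_graph H) X" "has_tail_in X C'" for X
  proof -
    obtain k where "\<forall>j\<ge>k. X j \<in> C'" using X(2) unfolding has_tail_in_def by blast
    then have "junction X j \<in> C" if "j \<ge> k" for j
      using that reach_line_graph_imp_reach[OF assms(1) _ e(1) eS z, of "X j"] junction_mem(1)[OF X(1)]
      unfolding C'_eq C_def S'_def by blast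
    then show ?thesis unfolding has_tail_in_def by blast
  qed
  ultimately show "\<exists>C\<in>components (del_verts H S). has_tail_in (junction R) C \<and> has_tail_in (junction Q) C"
    using R Q C' by blast
qed

lemma ray_equiv_line_graph_if_ray_equiv_junction:
  assumes "is_graph H"
    and R: "ray (line_graph H) R" and Q: "ray (line_graph H) Q"
    and "ray_equiv H (junction R) (junction Q)"
  shows "ray_equiv (line_graph H) R Q"
  unfolding ray_equiv_def
proof (intro allI impI)
  fix S' assume S': "finite S' \<and> S' \<subseteq> verts (line_graph H)"
  define S where "S = \<Union>S'"
  have "finite S" unfolding S_def using S' is_graph_finite_edge[OF assms(1)] by (auto intro!: finite_Union)
  moreover have "S \<subseteq> verts H" unfolding S_def using S' is_graph_edge_subset_verts[OF assms(1)] by auto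
  ultimately obtain C where C: "C \<in> components (del_verts H S)"
      "has_tail_in (junction R) C" "has_tail_in (junction Q) C"
    using assms(4) unfolding ray_equiv_def by blast
  obtain z where "z \<notin> S" and C_eq: "C = {y. (adj (del_verts H S))\<^sup>*\<^sup>* z y}"
    using C(1) unfolding mem_components_iff by auto
  then have "y \<notin> S" if "y \<in> C" for y
    using that by (metis mem_Collect_eq rtranclp_adj_del_verts_notin)
  then have outside: "X j \<notin> S'" if "ray (line_graph H) X" "junction X j \<in> C" for X j
    using that(2) junction_mem(1)[OF that(1), of j] unfolding S_def by blast
  obtain k where k: "junction R k \<in> C" using C(2) unfolding has_tail_in_def by blast
  have e: "R k \<in> edges H" "R k \<notin> S'" "junction R k \<in> R k"
    using R outside[OF R k] junction_mem(1)[OF R] by (auto simp: ray_line_graph_iff)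
  define C' where "C' = {f. (adj (del_verts (line_graph H) S'))\<^sup>*\<^sup>* (R k) f}"
  have reach: "X j \<in> C'" if X: "ray (line_graph H) X" "junction X j \<in> C" for X j
  proof -
    have "(adj (del_verts H S))\<^sup>*\<^sup>* (junction R k) z" "(adj (del_verts H S))\<^sup>*\<^sup>* z (junction X j)"
      using k X(2) rtranclp_adj_sym[of "del_verts H S" z] unfolding C_eq by auto
    then have "(adj (del_verts H (\<Union>S')))\<^sup>*\<^sup>* (junction R k) (junction X j)"
      unfolding S_def by (rule rtranclp_trans)
    moreover have "X j \<in> edges H" using X(1) by (simp add: ray_line_graph_iff)
    ultimately show ?thesis
      unfolding C'_def using reach_imp_reach_line_graph[OF _ e] outside[OF X] junction_mem(1)[OF X(1)]
      by simp
  qed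
  have "C' \<in> components (del_verts (line_graph H) S')"
    unfolding C'_def mem_components_iff using e by auto
  moreover have "has_tail_in X C'" if "ray (line_graph H) X" "has_tail_in (junction X) C" for X
    using that reach unfolding has_tail_in_def by blast
  ultimately show "\<exists>C\<in>components (del_verts (line_graph H) S'). has_tail_in R C \<and> has_tail_in Q C"
    using R Q C by blast
qed

subsection \<open>Loop erasure\<close>

definition last_occurrence :: "(nat \<Rightarrow> 'a) \<Rightarrow> nat \<Rightarrow> nat" where
  "last_occurrence p i = Max {j. p j = p i}"

fun loop_erasure_index :: "(nat \<Rightarrow> 'a) \<Rightarrow> nat \<Rightarrow> nat" where
  "loop_erasure_index p 0 = last_occurrence p 0"
| "loop_erasure_index p (Suc k) = last_occurrence p (Suc (loop_erasure_index p k))"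

definition loop_erasure :: "(nat \<Rightarrow> 'a) \<Rightarrow> nat \<Rightarrow> 'a" where
  "loop_erasure p = p \<circ> loop_erasure_index p"

context
  fixes p :: "nat \<Rightarrow> 'a"
  assumes finite_fibres: "\<And>i. finite {j. p j = p i}"
begin

lemma last_occurrence_eq: "p (last_occurrence p i) = p i"
proof -
  have "last_occurrence p i \<in> {j. p j = p i}"
    unfolding last_occurrence_def using finite_fibres by (intro Max_in) auto
  then show ?thesis by simp
qed

lemma last_occurrence_ge: "i \<le> last_occurrence p i"
  unfolding last_occurrence_def using finite_fibres by (intro Max_ge) auto

lemma last_occurrence_less: "last_occurrence p i < j \<Longrightarrow> p j \<noteq> p i"
  unfolding last_occurrence_def using finite_fibres by (metis (mono_tags) Max_ge leD mem_Collect_eq)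

lemma loop_erasure_index_last: "loop_erasure_index p k < j \<Longrightarrow> p j \<noteq> p (loop_erasure_index p k)"
  by (cases k) (auto simp: last_occurrence_eq dest: last_occurrence_less)

lemma strict_mono_loop_erasure_index: "strict_mono (loop_erasure_index p)"
  unfolding strict_mono_Suc_iff using last_occurrence_ge by (simp add: Suc_le_lessD)

lemma loop_erasure_Suc: "loop_erasure p (Suc k) = p (Suc (loop_erasure_index p k))"
  by (simp add: loop_erasure_def last_occurrence_eq)

lemma inj_loop_erasure: "inj (loop_erasure p)"
proof (rule injI)
  fix a b assume eq: "loop_erasure p a = loop_erasure p b"
  have "loop_erasure p a \<noteq> loop_erasure p b" if "a < b" for a b
    using loop_erasure_index_last strict_mono_loop_erasure_index that
    by (metis comp_apply loop_erasure_def strict_mono_less)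
  then show "a = b" using eq by (metis linorder_neqE_nat)
qed

lemma ray_equiv_loop_erasure:
  assumes "ray_equiv H p p"
  shows "ray_equiv H p (loop_erasure p)"
  unfolding loop_erasure_def
  using ray_equiv_reindex[OF assms] strict_mono_loop_erasure_index strict_mono_imp_increasing by blast

lemma ray_loop_erasure:
  assumes "\<And>i. p i \<in> verts H" "\<And>i. p i \<noteq> p (Suc i) \<Longrightarrow> {p i, p (Suc i)} \<in> edges H"
  shows "ray H (loop_erasure p)"
proof -
  have "{loop_erasure p k, loop_erasure p (Suc k)} \<in> edges H" for k
    using assms(2)[of "loop_erasure_index p k"] loop_erasure_index_last[of k "Suc (loop_erasure_index p k)"]
    unfolding loop_erasure_Suc by (simp add: loop_erasure_def)
  then show ?thesis unfolding ray_def using inj_loop_erasure assms(1) by (simp add: loop_erasure_def)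
qed

end

subsection \<open>The vertex ray of a line-graph ray\<close>

definition vertex_ray :: "(nat \<Rightarrow> 'a set) \<Rightarrow> nat \<Rightarrow> 'a" where
  "vertex_ray R = loop_erasure (junction R)"

lemma ray_equiv_line_graph_iff_junction:
  assumes "is_graph H" "locally_finite H" "ray (line_graph H) R" "ray (line_graph H) Q"
  shows "ray_equiv (line_graph H) R Q \<longleftrightarrow> ray_equiv H (junction R) (junction Q)"
  using ray_equiv_junction_if_ray_equiv_line_graph[OF assms]
    ray_equiv_line_graph_if_ray_equiv_junction[OF assms(1,3,4)]
  by blast

lemma
  assumes "is_graph H" "locally_finite H" "ray (line_graph H) R"
  shows ray_vertex_ray: "ray H (vertex_ray R)"
    and ray_equiv_junction_vertex_ray: "ray_equiv H (junction R) (vertex_ray R)"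
proof -
  have fibres: "finite {j. junction R j = junction R i}" for i
    using finite_junction_fibre[OF assms] .
  show "ray H (vertex_ray R)"
    unfolding vertex_ray_def
    by (rule ray_loop_erasure[OF fibres junction_in_verts[OF assms(1,3)] junction_walk[OF assms(1,3)]])
  \<comment> \<open>A junction sequence may repeat vertices, so it is not a ray of H; use reflexivity in L(H).\<close>
  have "ray_equiv H (junction R) (junction R)"
    using ray_equiv_junction_if_ray_equiv_line_graph[OF assms assms(3) ray_equiv_refl[OF assms(3)]] .
  then show "ray_equiv H (junction R) (vertex_ray R)"
    unfolding vertex_ray_def by (rule ray_equiv_loop_erasure[OF fibres])
qed

lemma ray_equiv_line_graph_iff_vertex_ray:
  assumes "is_graph H" "locally_finite H" "ray (line_graph H) R" "ray (line_graph H) Q"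
  shows "ray_equiv (line_graph H) R Q \<longleftrightarrow> ray_equiv H (vertex_ray R) (vertex_ray Q)"
  using ray_equiv_line_graph_iff_junction[OF assms]
    ray_equiv_cong[OF ray_equiv_junction_vertex_ray[OF assms(1-3)] ray_equiv_junction_vertex_ray[OF assms(1,2,4)]]
  by simp

lemma ray_line_graph_edges:
  assumes "ray H s"
  shows "ray (line_graph H) (\<lambda>i. {s i, s (Suc i)})"
    and "junction (\<lambda>i. {s i, s (Suc i)}) = s \<circ> Suc"
proof -
  have inj: "s a = s b \<longleftrightarrow> a = b" for a b using assms by (meson injD ray_def)
  have "inj (\<lambda>i. {s i, s (Suc i)})"
    by (rule injI) (auto simp: doubleton_eq_iff inj)
  then show R: "ray (line_graph H) (\<lambda>i. {s i, s (Suc i)})"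
    using assms unfolding ray_line_graph_iff by (auto simp: ray_def)
  show "junction (\<lambda>i. {s i, s (Suc i)}) = s \<circ> Suc"
  proof
    fix i
    have "s i \<noteq> s (Suc (Suc i))" by (simp add: inj)
    then show "junction (\<lambda>i. {s i, s (Suc i)}) i = (s \<circ> Suc) i"
      using junction_mem[OF R, of i] by auto
  qed
qed

subsection \<open>Faithful subgraphs\<close>

lemma locally_finite_subgraph:
  assumes "subgraph F G" "locally_finite G"
  shows "locally_finite F"
  unfolding locally_finite_def
proof
  fix v assume "v \<in> verts F"
  then have "finite {e \<in> edges G. v \<in> e}"
    using assms unfolding subgraph_def locally_finite_def by blast
  then show "finite {e \<in> edges F. v \<in> e}"
    by (rule rev_finite_subset) (use assms in \<open>auto simp: subgraph_def\<close>)
qed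

lemma ray_line_graph_subgraph: "subgraph F G \<Longrightarrow> ray (line_graph F) R \<Longrightarrow> ray (line_graph G) R"
  unfolding ray_line_graph_iff subgraph_def by (meson subsetD)

lemma ends_line_graph_meet_subgraph:
  assumes "is_graph G" "locally_finite G" "subgraph F G"
    and ends_meet: "\<forall>\<omega>\<in>ends G. \<exists>r\<in>\<omega>. ray F r"
    and "\<omega> \<in> ends (line_graph G)"
  shows "\<exists>R\<in>\<omega>. ray (line_graph F) R"
proof -
  obtain R where R: "ray (line_graph G) R"
    and \<omega>: "\<omega> = {Q. ray (line_graph G) Q \<and> ray_equiv (line_graph G) R Q}"
    using assms(5) unfolding ends_def by auto
  have "{s. ray G s \<and> ray_equiv G (vertex_ray R) s} \<in> ends G"
    unfolding ends_def using ray_vertex_ray[OF assms(1,2) R] by blast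
  then have "\<exists>s\<in>{s. ray G s \<and> ray_equiv G (vertex_ray R) s}. ray F s" by (rule bspec[OF ends_meet])
  then obtain s where s: "ray G s" "ray_equiv G (vertex_ray R) s" "ray F s" by blast
  define Q where "Q = (\<lambda>i. {s i, s (Suc i)})"
  have QF: "ray (line_graph F) Q" and QG: "ray (line_graph G) Q"
    unfolding Q_def using ray_line_graph_edges(1) s(3) ray_line_graph_subgraph[OF assms(3)] by blast+
  have "ray_equiv G s (junction Q)"
    unfolding Q_def ray_line_graph_edges(2)[OF s(1)]
    using ray_equiv_reindex[OF ray_equiv_refl[OF s(1)], of Suc] by simp
  then have "ray_equiv G (vertex_ray R) (vertex_ray Q)"
    using s(2) ray_equiv_junction_vertex_ray[OF assms(1,2) QG] by (meson ray_equiv_trans)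
  then have "Q \<in> \<omega>"
    unfolding \<omega> using ray_equiv_line_graph_iff_vertex_ray[OF assms(1,2) R QG] QG by blast
  then show ?thesis using QF by blast
qed

lemma ray_equiv_line_graph_subgraph_iff:
  assumes "is_graph G" "locally_finite G" "subgraph F G"
    and equiv_iff: "\<forall>r s. ray F r \<and> ray F s \<longrightarrow> (ray_equiv F r s \<longleftrightarrow> ray_equiv G r s)"
    and R: "ray (line_graph F) R" and Q: "ray (line_graph F) Q"
  shows "ray_equiv (line_graph F) R Q \<longleftrightarrow> ray_equiv (line_graph G) R Q"
proof -
  have F: "is_graph F" "locally_finite F"
    using assms(3) locally_finite_subgraph[OF assms(3,2)] by (auto simp: subgraph_def)
  have RG: "ray (line_graph G) R" and QG: "ray (line_graph G) Q"
    using ray_line_graph_subgraph[OF assms(3)] R Q by auto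
  have "ray_equiv (line_graph F) R Q \<longleftrightarrow> ray_equiv F (vertex_ray R) (vertex_ray Q)"
    using ray_equiv_line_graph_iff_vertex_ray[OF F R Q] .
  also have "\<dots> \<longleftrightarrow> ray_equiv G (vertex_ray R) (vertex_ray Q)"
    using equiv_iff ray_vertex_ray[OF F R] ray_vertex_ray[OF F Q] by blast
  also have "\<dots> \<longleftrightarrow> ray_equiv (line_graph G) R Q"
    using ray_equiv_line_graph_iff_vertex_ray[OF assms(1,2) RG QG] by simp
  finally show ?thesis .
qed

theorem lemma27:
  fixes G F :: "'a graph"
  assumes "is_graph G" and "locally_finite G" and "subgraph F G"
    and "faithful F G"
  shows "faithful (line_graph F) (line_graph G)"
proof -
  have ends_meet: "\<forall>\<omega>\<in>ends G. \<exists>r\<in>\<omega>. ray F r"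
    and equiv_iff: "\<forall>r s. ray F r \<and> ray F s \<longrightarrow> (ray_equiv F r s \<longleftrightarrow> ray_equiv G r s)"
    using assms(4) unfolding faithful_def by blast+
  show ?thesis
    unfolding faithful_def
    using ends_line_graph_meet_subgraph[OF assms(1-3) ends_meet]
      ray_equiv_line_graph_subgraph_iff[OF assms(1-3) equiv_iff]
    by blast
qed

end
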